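(* Let $R$ be a commutative ring and $A=(a_{ij})$, $B=(b_{jk})$ be $3\times 3$ matrices over $R$. Define, for $r=1,2,3$ and $s=6(r-1)$: $p_{s+1}=(a_{r2}+b_{12})(a_{r1}+b_{21})$, $p_{s+2}=(a_{r3}+b_{13})(a_{r1}+b_{31})$, $p_{s+3}=(a_{r3}+b_{23})(a_{r2}+b_{32})$, $p_{s+4}=a_{r1}(b_{11}-b_{12}-b_{13}-a_{r2}-a_{r3})$, $p_{s+5}=a_{r2}(b_{22}-b_{21}-b_{23}-a_{r1}-a_{r3})$, $p_{s+6}=a_{r3}(b_{33}-b_{31}-b_{32}-a_{r1}-a_{r2})$, and $p_{19}=b_{12}b_{21}$, $p_{20}=b_{13}b_{31}$, $p_{21}=b_{23}b_{32}$. Then for $r=1,2,3$ with $s=6(r-1)$, the $r$-th row of $AB$ equals $\big(p_{s+4}+p_{s+1}+p_{s+2}-p_{19}-p_{20},\; p_{s+5}+p_{s+1}+p_{s+3}-p_{19}-p_{21},\; p_{s+6}+p_{s+2}+p_{s+3}-p_{20}-p_{21}\big)$. In particular, the product of two $3\times 3$ matrices over a commutative ring can be computed using $21$ multiplications.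
   Context: "The product can be computed using $k$ multiplications" means: there are $k$ products, each a product of two linear forms with integer coefficients in the entries of $A$ and $B$, such that every entry of $AB$ is an integer linear combination of these $k$ products, identically for all inputs over any commutative ring; additions, subtractions and multiplications by integer constants are not counted. *)

theory Defs
  imports Main
begin

text \<open>3x3 matrices over a commutative ring are functions nat => nat => 'a,
  only the entries with indices in {1..3} being relevant.\<close>

definition mat_mult3 :: "(nat \<Rightarrow> nat \<Rightarrow> 'a::comm_ring_1) \<Rightarrow> (nat \<Rightarrow> nat \<Rightarrow> 'a) \<Rightarrow> nat \<Rightarrow> nat \<Rightarrow> 'a" where
  "mat_mult3 A B i k = (\<Sum>j\<in>{1..3}. A i j * B j k)"

definition pprod :: "(nat \<Rightarrow> nat \<Rightarrow> 'a::comm_ring_1) \<Rightarrow> (nat \<Rightarrow> nat \<Rightarrow> 'a) \<Rightarrow> nat \<Rightarrow> 'a" where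
  "pprod A B n =
    (if 1 \<le> n \<and> n \<le> 18 then
       (let r = (n - 1) div 6 + 1; q = (n - 1) mod 6 + 1 in
        if q = 1 then (A r 2 + B 1 2) * (A r 1 + B 2 1)
        else if q = 2 then (A r 3 + B 1 3) * (A r 1 + B 3 1)
        else if q = 3 then (A r 3 + B 2 3) * (A r 2 + B 3 2)
        else if q = 4 then A r 1 * (B 1 1 - B 1 2 - B 1 3 - A r 2 - A r 3)
        else if q = 5 then A r 2 * (B 2 2 - B 2 1 - B 2 3 - A r 1 - A r 3)
        else A r 3 * (B 3 3 - B 3 1 - B 3 2 - A r 1 - A r 2))
     else if n = 19 then B 1 2 * B 2 1
     else if n = 20 then B 1 3 * B 3 1
     else if n = 21 then B 2 3 * B 3 2
     else 0)"

text \<open>A linear form with integer coefficients in the entries of A and B: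
  w (False,i,j) is the coefficient of a_ij, w (True,i,j) that of b_ij.\<close>

definition linform :: "(bool \<times> nat \<times> nat \<Rightarrow> int) \<Rightarrow> (nat \<Rightarrow> nat \<Rightarrow> 'a::comm_ring_1) \<Rightarrow> (nat \<Rightarrow> nat \<Rightarrow> 'a) \<Rightarrow> 'a" where
  "linform w A B = (\<Sum>i\<in>{1..3}. \<Sum>j\<in>{1..3}.
      of_int (w (False, i, j)) * A i j + of_int (w (True, i, j)) * B i j)"

definition mult3_computable_with :: "'a::comm_ring_1 itself \<Rightarrow> nat \<Rightarrow> bool" where
  "mult3_computable_with (_ :: 'a itself) k \<longleftrightarrow>
    (\<exists>(u :: nat \<Rightarrow> bool \<times> nat \<times> nat \<Rightarrow> int) (v :: nat \<Rightarrow> bool \<times> nat \<times> nat \<Rightarrow> int)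
        (c :: nat \<Rightarrow> nat \<Rightarrow> nat \<Rightarrow> int).
      \<forall>(A :: nat \<Rightarrow> nat \<Rightarrow> 'a) B. \<forall>i\<in>{1..3}. \<forall>j\<in>{1..3}.
        mat_mult3 A B i j = (\<Sum>t<k. of_int (c i j t) * (linform (u t) A B * linform (v t) A B)))"

end

theory Submission
  imports Defs
begin

text \<open>For i < j the product (a_rj + b_ij)(a_ri + b_ji) contains the term a_rj b_ji of
  entry (r,i) of AB and the term a_ri b_ij of entry (r,j), so it is added to both entries. The
  unwanted cross terms and the products a_ri a_rj are cancelled by the diagonal products
  p_(s+4), p_(s+5), p_(s+6), while b_ij b_ji does not depend on r: the three products
  p_19, p_20, p_21 cancelling these serve all rows, whence 21 = 3 * 6 + 3.\<close>

lemma atLeastAtMost_1_3_nat: "{1..3::nat} = {1, 2, 3}"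
  by auto

definition coord_A :: "nat \<Rightarrow> nat \<Rightarrow> bool \<times> nat \<times> nat \<Rightarrow> int" where
  "coord_A i j = (\<lambda>x. if x = (False, i, j) then 1 else 0)"

definition coord_B :: "nat \<Rightarrow> nat \<Rightarrow> bool \<times> nat \<times> nat \<Rightarrow> int" where
  "coord_B i j = (\<lambda>x. if x = (True, i, j) then 1 else 0)"

definition form_add :: "('c \<Rightarrow> int) \<Rightarrow> ('c \<Rightarrow> int) \<Rightarrow> 'c \<Rightarrow> int" (infixl "\<oplus>" 65) where
  "w1 \<oplus> w2 = (\<lambda>x. w1 x + w2 x)"

definition form_diff :: "('c \<Rightarrow> int) \<Rightarrow> ('c \<Rightarrow> int) \<Rightarrow> 'c \<Rightarrow> int" (infixl "\<ominus>" 65) where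
  "w1 \<ominus> w2 = (\<lambda>x. w1 x - w2 x)"

lemma linform_add: "linform (w1 \<oplus> w2) A B = linform w1 A B + linform w2 A B"
  unfolding linform_def form_add_def by (simp add: sum.distrib[symmetric] algebra_simps)

lemma linform_diff: "linform (w1 \<ominus> w2) A B = linform w1 A B - linform w2 A B"
  unfolding linform_def form_diff_def by (simp add: sum_subtractf[symmetric] algebra_simps)

lemma linform_coord_A: "i \<in> {1..3} \<Longrightarrow> j \<in> {1..3} \<Longrightarrow> linform (coord_A i j) A B = A i j"
  unfolding linform_def coord_A_def atLeastAtMost_1_3_nat by auto

lemma linform_coord_B: "i \<in> {1..3} \<Longrightarrow> j \<in> {1..3} \<Longrightarrow> linform (coord_B i j) A B = B i j"
  unfolding linform_def coord_B_def atLeastAtMost_1_3_nat by auto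

lemmas linform_simps = linform_add linform_diff linform_coord_A linform_coord_B

lemma mult3_computable_withI:
  fixes P :: "(nat \<Rightarrow> nat \<Rightarrow> 'a::comm_ring_1) \<Rightarrow> (nat \<Rightarrow> nat \<Rightarrow> 'a) \<Rightarrow> nat \<Rightarrow> 'a"
  assumes products: "\<And>A B t. t < k \<Longrightarrow> linform (u t) A B * linform (v t) A B = P A B t"
    and entries: "\<And>A B i j. i \<in> {1..3} \<Longrightarrow> j \<in> {1..3} \<Longrightarrow>
                    mat_mult3 A B i j = (\<Sum>t<k. of_int (c i j t) * P A B t)"
  shows "mult3_computable_with TYPE('a) k"
  unfolding mult3_computable_with_def
proof (intro exI allI ballI)
  fix A B :: "nat \<Rightarrow> nat \<Rightarrow> 'a" and i j :: nat
  assume "i \<in> {1..3}" "j \<in> {1..3}"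
  then show "mat_mult3 A B i j = (\<Sum>t<k. of_int (c i j t) * (linform (u t) A B * linform (v t) A B))"
    by (simp add: entries products)
qed

lemma mat_mult3_rows_eq_pprod:
  fixes A B :: "nat \<Rightarrow> nat \<Rightarrow> 'a::comm_ring_1"
  shows "\<forall>r\<in>{1,2,3::nat}. let s = 6 * (r - 1); p = pprod A B in
            mat_mult3 A B r 1 = p (s+4) + p (s+1) + p (s+2) - p 19 - p 20 \<and>
            mat_mult3 A B r 2 = p (s+5) + p (s+1) + p (s+3) - p 19 - p 21 \<and>
            mat_mult3 A B r 3 = p (s+6) + p (s+2) + p (s+3) - p 20 - p 21"
  unfolding mat_mult3_def atLeastAtMost_1_3_nat
  by (simp add: pprod_def Let_def algebra_simps numeral_2_eq_2[symmetric] numeral_3_eq_3[symmetric])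

definition pprod_left :: "nat \<Rightarrow> bool \<times> nat \<times> nat \<Rightarrow> int" where
  "pprod_left n =
    (if n \<le> 18 then
       (let r = (n - 1) div 6 + 1; q = (n - 1) mod 6 + 1 in
        if q = 1 then coord_A r 2 \<oplus> coord_B 1 2
        else if q = 2 then coord_A r 3 \<oplus> coord_B 1 3
        else if q = 3 then coord_A r 3 \<oplus> coord_B 2 3
        else if q = 4 then coord_A r 1
        else if q = 5 then coord_A r 2
        else coord_A r 3)
     else if n = 19 then coord_B 1 2
     else if n = 20 then coord_B 1 3
     else coord_B 2 3)"

definition pprod_right :: "nat \<Rightarrow> bool \<times> nat \<times> nat \<Rightarrow> int" where
  "pprod_right n =
    (if n \<le> 18 then
       (let r = (n - 1) div 6 + 1; q = (n - 1) mod 6 + 1 in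
        if q = 1 then coord_A r 1 \<oplus> coord_B 2 1
        else if q = 2 then coord_A r 1 \<oplus> coord_B 3 1
        else if q = 3 then coord_A r 2 \<oplus> coord_B 3 2
        else if q = 4 then coord_B 1 1 \<ominus> coord_B 1 2 \<ominus> coord_B 1 3 \<ominus> coord_A r 2 \<ominus> coord_A r 3
        else if q = 5 then coord_B 2 2 \<ominus> coord_B 2 1 \<ominus> coord_B 2 3 \<ominus> coord_A r 1 \<ominus> coord_A r 3
        else coord_B 3 3 \<ominus> coord_B 3 1 \<ominus> coord_B 3 2 \<ominus> coord_A r 1 \<ominus> coord_A r 2)
     else if n = 19 then coord_B 2 1
     else if n = 20 then coord_B 3 1
     else coord_B 3 2)"

lemma pprod_eq_linform_mult:
  assumes "n \<in> {1..21}"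
  shows "linform (pprod_left n) A B * linform (pprod_right n) A B = pprod A B n"
proof -
  obtain t where "n = t + 1" "t < 21"
    using assms by (cases n) auto
  then have "n \<in> {1,2,3,4,5,6,7,8,9,10,11,12,13,14,15,16,17,18,19,20,21}"
    by (simp add: eval_nat_numeral less_Suc_eq)
  then show ?thesis
    by (auto simp: pprod_left_def pprod_right_def pprod_def Let_def linform_simps)
qed

definition row_coeff :: "nat \<Rightarrow> nat \<Rightarrow> nat \<Rightarrow> int" where
  "row_coeff r k n = (let s = 6 * (r - 1) in
     if k = 1 then (if n \<in> {s+4, s+1, s+2} then 1 else if n \<in> {19, 20} then -1 else 0)
     else if k = 2 then (if n \<in> {s+5, s+1, s+3} then 1 else if n \<in> {19, 21} then -1 else 0)
     else (if n \<in> {s+6, s+2, s+3} then 1 else if n \<in> {20, 21} then -1 else 0))"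

lemma mat_mult3_eq_sum_row_coeff:
  fixes A B :: "nat \<Rightarrow> nat \<Rightarrow> 'a::comm_ring_1"
  assumes "i \<in> {1..3}" "j \<in> {1..3}"
  shows "mat_mult3 A B i j = (\<Sum>t<21. of_int (row_coeff i j (t+1)) * pprod A B (t+1))"
proof -
  have lessThan_21: "{..<21::nat} = {0,1,2,3,4,5,6,7,8,9,10,11,12,13,14,15,16,17,18,19,20}"
    by (auto simp: eval_nat_numeral less_Suc_eq)
  from assms have "i = 1 \<or> i = 2 \<or> i = 3" "j = 1 \<or> j = 2 \<or> j = 3"
    by auto
  then show ?thesis
    using mat_mult3_rows_eq_pprod[of A B]
    by (elim disjE) (simp_all add: lessThan_21 row_coeff_def Let_def)
qed

theorem mainTheorem3:
  fixes A B :: "nat \<Rightarrow> nat \<Rightarrow> 'a::comm_ring_1"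
  shows "(\<forall>r\<in>{1,2,3::nat}. let s = 6 * (r - 1); p = pprod A B in
            mat_mult3 A B r 1 = p (s+4) + p (s+1) + p (s+2) - p 19 - p 20 \<and>
            mat_mult3 A B r 2 = p (s+5) + p (s+1) + p (s+3) - p 19 - p 21 \<and>
            mat_mult3 A B r 3 = p (s+6) + p (s+2) + p (s+3) - p 20 - p 21)
         \<and> mult3_computable_with TYPE('a) 21"
proof (rule conjI[OF mat_mult3_rows_eq_pprod])
  show "mult3_computable_with TYPE('a) 21"
  proof (rule mult3_computable_withI)
    show "linform (pprod_left (t+1)) A' B' * linform (pprod_right (t+1)) A' B' = pprod A' B' (t+1)"
      if "t < 21" for t and A' B' :: "nat \<Rightarrow> nat \<Rightarrow> 'a"
      using that by (intro pprod_eq_linform_mult) auto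
  qed (rule mat_mult3_eq_sum_row_coeff)
qed

end
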